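(* Let $\mathcal{A}$ be a unital algebra over a field $F$ with $\operatorname{char}(F)\neq2$, having an idempotent $e\neq0,1$, and write $e^{\perp}=1-e$. Assume that for every $x\in\mathcal{A}$: if $exe\cdot e\mathcal{A}e^{\perp}=\{0\}=e^{\perp}\mathcal{A}e\cdot exe$ then $exe=0$, and if $e\mathcal{A}e^{\perp}\cdot e^{\perp}xe^{\perp}=\{0\}=e^{\perp}xe^{\perp}\cdot e^{\perp}\mathcal{A}e$ then $e^{\perp}xe^{\perp}=0$. Then $\operatorname{QJDer}(\mathcal{A})=\operatorname{Cent}(\mathcal{A})+\operatorname{JDer}(\mathcal{A})$.
   Context: $x\circ y=xy+yx$. $\operatorname{QJDer}(\mathcal{A})$: linear $f:\mathcal{A}\to\mathcal{A}$ for which there is a linear $h$ with $f(x)\circ y+x\circ f(y)=h(x\circ y)$ for all $x,y$. $\operatorname{Cent}(\mathcal{A})$: linear $f$ with $f(xy)=f(x)y=xf(y)$. $\operatorname{JDer}(\mathcal{A})$: linear $d$ with $d(x\circ y)=d(x)\circ y+x\circ d(y)$. Sums of sets of maps are sets of pointwise sums. *)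

theory Defs
  imports Complex_Main
begin

definition unital_algebra :: "('k::field \<Rightarrow> 'a::ring_1 \<Rightarrow> 'a) \<Rightarrow> bool" where
  "unital_algebra sc \<longleftrightarrow> vector_space sc \<and>
     (\<forall>c x y. sc c (x * y) = sc c x * y \<and> sc c (x * y) = x * sc c y)"

definition jprod :: "'a::ring \<Rightarrow> 'a \<Rightarrow> 'a" (infixl "\<circ>\<^sub>J" 70) where
  "jprod x y = x * y + y * x"

definition QJDer :: "('k::field \<Rightarrow> 'a::ring_1 \<Rightarrow> 'a) \<Rightarrow> ('a \<Rightarrow> 'a) set" where
  "QJDer sc = {f. Vector_Spaces.linear sc sc f \<and>
     (\<exists>h. Vector_Spaces.linear sc sc h \<and>
        (\<forall>x y. f x \<circ>\<^sub>J y + x \<circ>\<^sub>J f y = h (x \<circ>\<^sub>J y)))}"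

definition Cent :: "('k::field \<Rightarrow> 'a::ring_1 \<Rightarrow> 'a) \<Rightarrow> ('a \<Rightarrow> 'a) set" where
  "Cent sc = {f. Vector_Spaces.linear sc sc f \<and>
     (\<forall>x y. f (x * y) = f x * y \<and> f (x * y) = x * f y)}"

definition JDer :: "('k::field \<Rightarrow> 'a::ring_1 \<Rightarrow> 'a) \<Rightarrow> ('a \<Rightarrow> 'a) set" where
  "JDer sc = {d. Vector_Spaces.linear sc sc d \<and>
     (\<forall>x y. d (x \<circ>\<^sub>J y) = d x \<circ>\<^sub>J y + x \<circ>\<^sub>J d y)}"

definition map_set_plus :: "('a \<Rightarrow> 'b::plus) set \<Rightarrow> ('a \<Rightarrow> 'b) set \<Rightarrow> ('a \<Rightarrow> 'b) set" where
  "map_set_plus S T = {(\<lambda>x. f x + g x) | f g. f \<in> S \<and> g \<in> T}"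

end

theory Submission
  imports Defs
begin

text \<open>Let \<open>f\<close> be a quasi-Jordan derivation with companion \<open>h\<close> and put \<open>z = f 1\<close>.
  Comparing the defining identity at \<open>(x, y)\<close> with its instance at \<open>(x \<circ> y, 1)\<close>
  eliminates \<open>h\<close>: \<open>2 (f x \<circ> y + x \<circ> f y) = 2 f (x \<circ> y) + (x \<circ> y) \<circ> z\<close>.
  Evaluating this at \<open>(e, e)\<close> and at \<open>(e, u)\<close> with \<open>u\<close> in an off-diagonal Peirce space
  and cutting down by \<open>e\<close> and \<open>1 - e\<close> shows that \<open>z\<close> commutes with \<open>e\<close> and with both
  off-diagonal Peirce spaces. The commutator of \<open>z\<close> with a diagonal element then annihilates
  the off-diagonal spaces, so it vanishes by the faithfulness hypotheses; hence \<open>z\<close> is central,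
  and \<open>f - z\<close> is a Jordan derivation.\<close>


lemma idempotent_mult_absorb: "e * e = e \<Longrightarrow> e * (e * y) = (e * y :: 'a::ring_1)"
  by (metis mult.assoc)

lemma idempotent_complement: "e * e = e \<Longrightarrow> (1 - e) * (1 - (e::'a::ring_1)) = 1 - e"
  by (simp add: algebra_simps)

lemma peirce_decomposition:
  "(x::'a::ring_1) = e*x*e + e*x*(1-e) + (1-e)*x*e + (1-e)*x*(1-e)"
  by (simp add: algebra_simps)

lemma commutes_with_corner_if_commutes_off_diagonal:
  fixes e z :: "'a::ring_1"
  assumes idem: "e * e = e" and ez: "e * z = z * e"
    and z12: "\<And>c. z * (e*c*(1-e)) = (e*c*(1-e)) * z"
    and z21: "\<And>c. z * ((1-e)*c*e) = ((1-e)*c*e) * z"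
    and faithful: "\<And>x. (\<forall>a. (e * x * e) * (e * a * (1 - e)) = 0) \<Longrightarrow>
                  (\<forall>a. ((1 - e) * a * e) * (e * x * e) = 0) \<Longrightarrow> e * x * e = 0"
  shows "z * (e*x*e) = (e*x*e) * z"
proof -
  define w where "w = z * (e*x*e) - (e*x*e) * z"
  note e_assoc = idempotent_mult_absorb[OF idem]
  have ez_assoc: "e * (z * y) = z * (e * y)" for y
    by (metis ez mult.assoc)
  have w_corner: "e * w * e = w"
    unfolding w_def
    by (simp add: left_diff_distrib right_diff_distrib mult.assoc idem ez ez_assoc e_assoc)
  have "w * (e*c*(1-e)) = 0" for c
  proof -
    have "(e*x*e) * (e*c*(1-e)) = e*(x*e*c)*(1-e)"
      by (simp add: mult.assoc e_assoc)
    then show ?thesis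
      unfolding w_def using z12[of c] z12[of "x*e*c"]
      by (simp add: left_diff_distrib) (metis mult.assoc)
  qed
  moreover have "((1-e)*c*e) * w = 0" for c
  proof -
    have "((1-e)*c*e) * (e*x*e) = (1-e)*(c*e*x)*e"
      by (simp add: mult.assoc e_assoc)
    then show ?thesis
      unfolding w_def using z21[of c] z21[of "c*e*x"]
      by (simp add: right_diff_distrib) (metis mult.assoc)
  qed
  ultimately have "e * w * e = 0"
    using faithful[of w] w_corner by simp
  then show ?thesis
    using w_corner w_def by simp
qed

lemma central_if_commutes_off_diagonal:
  fixes e z :: "'a::ring_1"
  assumes idem: "e * e = e" and ez: "e * z = z * e"
    and z12: "\<And>c. z * (e*c*(1-e)) = (e*c*(1-e)) * z"
    and z21: "\<And>c. z * ((1-e)*c*e) = ((1-e)*c*e) * z"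
    and H1: "\<And>x. (\<forall>a. (e * x * e) * (e * a * (1 - e)) = 0) \<Longrightarrow>
                  (\<forall>a. ((1 - e) * a * e) * (e * x * e) = 0) \<Longrightarrow> e * x * e = 0"
    and H2: "\<And>x. (\<forall>a. (e * a * (1 - e)) * ((1 - e) * x * (1 - e)) = 0) \<Longrightarrow>
                  (\<forall>a. ((1 - e) * x * (1 - e)) * ((1 - e) * a * e) = 0) \<Longrightarrow>
                  (1 - e) * x * (1 - e) = 0"
  shows "z * x = x * z"
proof -
  have "z * (e*x*e) = (e*x*e) * z"
    using idem ez z12 z21 H1 by (rule commutes_with_corner_if_commutes_off_diagonal)
  moreover have "z * ((1-e)*x*(1-e)) = ((1-e)*x*(1-e)) * z"
    \<comment> \<open>the other diagonal corner is the first one for the idempotent \<open>1 - e\<close>, for which H2 is H1\<close>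
  proof (rule commutes_with_corner_if_commutes_off_diagonal)
    show "(1 - e) * (1 - e) = 1 - e" using idem by (rule idempotent_complement)
    show "(1 - e) * z = z * (1 - e)" using ez by (simp add: algebra_simps)
  qed (use z12 z21 H2 in auto)
  ultimately have "z * (e*x*e + e*x*(1-e) + (1-e)*x*e + (1-e)*x*(1-e))
      = (e*x*e + e*x*(1-e) + (1-e)*x*e + (1-e)*x*(1-e)) * z"
    using z12[of x] z21[of x] by (simp add: ring_distribs)
  then show ?thesis
    by (metis peirce_decomposition)
qed

locale quasi_jordan_pair =
  fixes f h :: "'a::ring_1 \<Rightarrow> 'a"
  assumes f_add: "f (x + y) = f x + f y"
    and h_add: "h (x + y) = h x + h y"
    and quasi_jordan: "f x \<circ>\<^sub>J y + x \<circ>\<^sub>J f y = h (x \<circ>\<^sub>J y)"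
    and two_torsion_free: "w + w = 0 \<Longrightarrow> w = (0::'a)"
begin

lemma double_cancel: "u + u = v + v \<Longrightarrow> u = (v::'a)"
  using two_torsion_free[of "u - v"] by (simp add: algebra_simps)

lemma doubled_quasi_jordan:
  "(f x \<circ>\<^sub>J y + x \<circ>\<^sub>J f y) + (f x \<circ>\<^sub>J y + x \<circ>\<^sub>J f y)
     = f (x \<circ>\<^sub>J y) + f (x \<circ>\<^sub>J y) + (x \<circ>\<^sub>J y) \<circ>\<^sub>J f 1"
proof -
  have "h w + h w = f w + f w + w \<circ>\<^sub>J f 1" for w
    using quasi_jordan[of w 1] h_add[of w w] by (simp add: jprod_def)
  then show ?thesis
    using quasi_jordan[of x y] by simp
qed

lemma quasi_jordan_idempotent:
  assumes "e * e = e"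
  shows "(f e * e + e * f e) + (f e * e + e * f e) = f e + f e + (e * f 1 + f 1 * e)"
proof (rule double_cancel)
  show "(f e * e + e * f e) + (f e * e + e * f e) + ((f e * e + e * f e) + (f e * e + e * f e))
      = (f e + f e + (e * f 1 + f 1 * e)) + (f e + f e + (e * f 1 + f 1 * e))"
    using doubled_quasi_jordan[of e e] assms by (simp add: jprod_def f_add algebra_simps)
qed

lemma unit_image_commutes_with_idempotent:
  assumes idem: "e * e = e"
  shows "e * f 1 = f 1 * e"
proof -
  note identity = quasi_jordan_idempotent[OF idem]
  note e_assoc = idempotent_mult_absorb[OF idem]
  have "e * f 1 = e * f 1 * e"
    using arg_cong[OF identity, of "\<lambda>w. e * w * (1 - e)"]
    by (simp add: ring_distribs mult.assoc idem e_assoc)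
  moreover have "f 1 * e = e * f 1 * e"
    using arg_cong[OF identity, of "\<lambda>w. (1 - e) * w * e"]
    by (simp add: ring_distribs mult.assoc idem e_assoc)
  ultimately show ?thesis
    by simp
qed

lemma idempotent_image_diagonal:
  assumes idem: "e * e = e"
  shows "e * f e * e = f 1 * e" and "(1 - e) * f e * (1 - e) = 0"
proof -
  note identity = quasi_jordan_idempotent[OF idem]
  note e_assoc = idempotent_mult_absorb[OF idem]
  have "e * f e * e + e * f e * e = e * f 1 * e + e * f 1 * e"
    using arg_cong[OF identity, of "\<lambda>w. e * w * e"]
    by (simp add: ring_distribs mult.assoc idem e_assoc)
  then show "e * f e * e = f 1 * e"
    using unit_image_commutes_with_idempotent[OF idem]
    by (metis double_cancel idem mult.assoc)
  have "(1 - e) * f e * (1 - e) + (1 - e) * f e * (1 - e) = 0 + 0"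
    using arg_cong[OF identity, of "\<lambda>w. (1 - e) * w * (1 - e)"]
    by (simp add: ring_distribs mult.assoc idem e_assoc) (simp add: algebra_simps)
  then show "(1 - e) * f e * (1 - e) = 0"
    by (rule double_cancel)
qed

lemma unit_image_commutes_off_diagonal:
  assumes idem: "e * e = e"
  shows "f 1 * (e*c*(1-e)) = (e*c*(1-e)) * f 1"
proof -
  define u where "u = e*c*(1-e)"
  note e_assoc = idempotent_mult_absorb[OF idem]
  have u: "e * u = u" "u * e = 0"
    unfolding u_def by (simp_all add: ring_distribs mult.assoc idem e_assoc)
  have u_assoc: "e * (u * y) = u * y" "u * (e * y) = 0" for y
    using u by (metis mult.assoc mult_zero_left)+
  have ze: "f 1 * e = e * f 1" and ez_assoc: "e * (f 1 * y) = f 1 * (e * y)" for y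
    using unit_image_commutes_with_idempotent[OF idem] by (metis mult.assoc)+
  have left_corner: "e * (f e * u) = f 1 * u"
    using idempotent_image_diagonal(1)[OF idem] u
    by (metis mult.assoc)
  have right_corner: "u * (f e * e) = u * f e"
  proof -
    have "u * ((1 - e) * f e * (1 - e)) = 0"
      using idempotent_image_diagonal(2)[OF idem] by simp
    then show ?thesis
      by (simp add: ring_distribs mult.assoc u_assoc)
  qed
  have "(f e \<circ>\<^sub>J u + e \<circ>\<^sub>J f u) + (f e \<circ>\<^sub>J u + e \<circ>\<^sub>J f u) = f u + f u + u \<circ>\<^sub>J f 1"
    using doubled_quasi_jordan[of e u] u by (simp add: jprod_def)
  \<comment> \<open>in the \<open>(e, 1 - e)\<close> corner only the diagonal corners of \<open>f e\<close> survive\<close>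
  from arg_cong[OF this, of "\<lambda>w. e * w * (1 - e)"]
  have "f 1 * u + f 1 * u = u * f 1 + f 1 * u"
    by (simp add: jprod_def ring_distribs mult.assoc idem e_assoc u u_assoc ze ez_assoc
        left_corner right_corner)
  then show ?thesis
    unfolding u_def by simp
qed

lemma unit_image_central:
  fixes e :: 'a
  assumes idem: "e * e = e"
    and H1: "\<And>x. (\<forall>a. (e * x * e) * (e * a * (1 - e)) = 0) \<Longrightarrow>
                  (\<forall>a. ((1 - e) * a * e) * (e * x * e) = 0) \<Longrightarrow> e * x * e = 0"
    and H2: "\<And>x. (\<forall>a. (e * a * (1 - e)) * ((1 - e) * x * (1 - e)) = 0) \<Longrightarrow>
                  (\<forall>a. ((1 - e) * x * (1 - e)) * ((1 - e) * a * e) = 0) \<Longrightarrow>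
                  (1 - e) * x * (1 - e) = 0"
  shows "f 1 * x = x * f 1"
proof (rule central_if_commutes_off_diagonal[OF idem _ _ _ H1 H2])
  show "e * f 1 = f 1 * e"
    using idem by (rule unit_image_commutes_with_idempotent)
  show "f 1 * (e*c*(1-e)) = (e*c*(1-e)) * f 1" for c
    using idem by (rule unit_image_commutes_off_diagonal)
  show "f 1 * ((1-e)*c*e) = ((1-e)*c*e) * f 1" for c
    using unit_image_commutes_off_diagonal[OF idempotent_complement[OF idem], of c] by simp
qed

lemma jordan_derivation_if_unit_image_central:
  assumes central: "\<And>x. f 1 * x = x * f 1"
  shows "f (x \<circ>\<^sub>J y) - f 1 * (x \<circ>\<^sub>J y)
    = (f x - f 1 * x) \<circ>\<^sub>J y + x \<circ>\<^sub>J (f y - f 1 * y)"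
proof -
  have "(f x \<circ>\<^sub>J y + x \<circ>\<^sub>J f y) + (f x \<circ>\<^sub>J y + x \<circ>\<^sub>J f y)
      = (f (x \<circ>\<^sub>J y) + f 1 * (x \<circ>\<^sub>J y)) + (f (x \<circ>\<^sub>J y) + f 1 * (x \<circ>\<^sub>J y))"
    using doubled_quasi_jordan[of x y] central[of "x \<circ>\<^sub>J y"]
    by (simp add: jprod_def algebra_simps)
  then have "f x \<circ>\<^sub>J y + x \<circ>\<^sub>J f y = f (x \<circ>\<^sub>J y) + f 1 * (x \<circ>\<^sub>J y)"
    by (rule double_cancel)
  moreover have "(f 1 * x) \<circ>\<^sub>J y + x \<circ>\<^sub>J (f 1 * y) = f 1 * (x \<circ>\<^sub>J y) + f 1 * (x \<circ>\<^sub>J y)"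
    using central by (simp add: jprod_def algebra_simps)
  ultimately show ?thesis
    by (simp add: jprod_def algebra_simps)
qed

end

lemma map_set_plusI: "f \<in> S \<Longrightarrow> g \<in> T \<Longrightarrow> (\<lambda>x. f x + g x) \<in> map_set_plus S T"
  unfolding map_set_plus_def by blast

lemma vector_space_two_torsion_free:
  fixes sc :: "'k::field \<Rightarrow> 'a::ab_group_add \<Rightarrow> 'a" and w :: 'a
  assumes "vector_space sc" and two: "(2::'k) \<noteq> 0" and "w + w = 0"
  shows "w = 0"
proof -
  interpret vector_space sc by fact
  have "sc 2 w = w + w"
    using scale_left_distrib[of 1 1 w] by (simp add: one_add_one)
  then show ?thesis
    using \<open>w + w = 0\<close> two by simp
qed

lemma linear_mult_left:
  "unital_algebra sc \<Longrightarrow> Vector_Spaces.linear sc sc (\<lambda>x. z * x)"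
  unfolding unital_algebra_def Vector_Spaces.linear_iff by (simp add: distrib_left) metis

lemma mult_left_in_Cent:
  assumes "unital_algebra sc" and central: "\<And>x. z * x = x * z"
  shows "(\<lambda>x. z * x) \<in> Cent sc"
proof -
  have "z * (x * y) = x * (z * y)" for x y
    by (metis central mult.assoc)
  then show ?thesis
    unfolding Cent_def using linear_mult_left[OF assms(1)] by (simp add: mult.assoc)
qed

lemma Cent_jprod:
  assumes "f \<in> Cent sc"
  shows "f x \<circ>\<^sub>J y = f (x \<circ>\<^sub>J y)" and "x \<circ>\<^sub>J f y = f (x \<circ>\<^sub>J y)"
proof -
  have add: "f (x * y + y * x) = f (x * y) + f (y * x)"
    using assms unfolding Cent_def Vector_Spaces.linear_iff by blast
  have left: "f (u * v) = f u * v" and right: "f (u * v) = u * f v" for u v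
    using assms unfolding Cent_def by blast+
  show "f x \<circ>\<^sub>J y = f (x \<circ>\<^sub>J y)"
    unfolding jprod_def add using left[of x y] right[of y x] by simp
  show "x \<circ>\<^sub>J f y = f (x \<circ>\<^sub>J y)"
    unfolding jprod_def add using right[of x y] left[of y x] by simp
qed

lemma Cent_plus_JDer_subset_QJDer:
  assumes vs: "vector_space sc"
  shows "map_set_plus (Cent sc) (JDer sc) \<subseteq> QJDer sc"
proof
  fix g assume "g \<in> map_set_plus (Cent sc) (JDer sc)"
  then obtain f d where g: "g = (\<lambda>x. f x + d x)" and f: "f \<in> Cent sc" and d: "d \<in> JDer sc"
    unfolding map_set_plus_def by blast
  interpret vector_space_pair sc sc
    using vs by (simp add: vector_space_pair_def)
  have lin: "Vector_Spaces.linear sc sc f" "Vector_Spaces.linear sc sc d"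
    using f d unfolding Cent_def JDer_def by blast+
  have "g x \<circ>\<^sub>J y + x \<circ>\<^sub>J g y = f (x \<circ>\<^sub>J y) + f (x \<circ>\<^sub>J y) + d (x \<circ>\<^sub>J y)" for x y
    using Cent_jprod[OF f] d unfolding g JDer_def by (simp add: jprod_def algebra_simps)
  moreover have "Vector_Spaces.linear sc sc (\<lambda>x. f x + f x + d x)"
    using lin by (intro linear_compose_add)
  ultimately show "g \<in> QJDer sc"
    unfolding QJDer_def g using lin by (blast intro: linear_compose_add)
qed

theorem proposition4p4:
  fixes sc :: "'k::field \<Rightarrow> 'a::ring_1 \<Rightarrow> 'a" and e :: 'a
  assumes alg: "unital_algebra sc"
    and char: "(2::'k) \<noteq> 0"
    and idem: "e * e = e" and e0: "e \<noteq> 0" and e1: "e \<noteq> 1"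
    and H1: "\<And>x. (\<forall>a. (e * x * e) * (e * a * (1 - e)) = 0) \<Longrightarrow>
                  (\<forall>a. ((1 - e) * a * e) * (e * x * e) = 0) \<Longrightarrow> e * x * e = 0"
    and H2: "\<And>x. (\<forall>a. (e * a * (1 - e)) * ((1 - e) * x * (1 - e)) = 0) \<Longrightarrow>
                  (\<forall>a. ((1 - e) * x * (1 - e)) * ((1 - e) * a * e) = 0) \<Longrightarrow>
                  (1 - e) * x * (1 - e) = 0"
  shows "QJDer sc = map_set_plus (Cent sc) (JDer sc)"
proof
  have vs: "vector_space sc"
    using alg unfolding unital_algebra_def by blast
  interpret vector_space_pair sc sc
    using vs by (simp add: vector_space_pair_def)
  show "QJDer sc \<subseteq> map_set_plus (Cent sc) (JDer sc)"
  proof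
    fix f assume "f \<in> QJDer sc"
    then obtain h where f: "Vector_Spaces.linear sc sc f" and h: "Vector_Spaces.linear sc sc h"
      and qj: "\<And>x y. f x \<circ>\<^sub>J y + x \<circ>\<^sub>J f y = h (x \<circ>\<^sub>J y)"
      unfolding QJDer_def by blast
    interpret quasi_jordan_pair f h
    proof
      show "f (x + y) = f x + f y" "h (x + y) = h x + h y" for x y
        using linear_add[OF f] linear_add[OF h] by blast+
    qed (fact qj, fact vector_space_two_torsion_free[OF vs char])
    have central: "f 1 * x = x * f 1" for x
      using idem H1 H2 by (rule unit_image_central)
    have "(\<lambda>x. f 1 * x) \<in> Cent sc"
      using alg central by (rule mult_left_in_Cent)
    moreover have "(\<lambda>x. f x - f 1 * x) \<in> JDer sc"
      unfolding JDer_def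
      using jordan_derivation_if_unit_image_central[OF central]
        linear_compose_sub[OF f linear_mult_left[OF alg]] by simp
    ultimately have "(\<lambda>x. f 1 * x + (f x - f 1 * x)) \<in> map_set_plus (Cent sc) (JDer sc)"
      by (rule map_set_plusI)
    then show "f \<in> map_set_plus (Cent sc) (JDer sc)"
      by simp
  qed
  show "map_set_plus (Cent sc) (JDer sc) \<subseteq> QJDer sc"
    using vs by (rule Cent_plus_JDer_subset_QJDer)
qed

end
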